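(* Let $\beta = (\nu_{1}, \dots, \nu_{n}, \nu_{n}, \dots, \nu_{1}) \in \Lambda_{2n}$ have at least one negative part. Then $\mathrm{meas}(Kp^{\lambda}Kg_{\mu} \cap K'p^{\beta}K') = 0$, the measure being taken in $H$.
   Context: Let $p$ be an odd prime and $a$ prime to $p$ and not a square mod $p$. $G=Gl_{2n}(\mathbb{Q}_p)$, $K=Gl_{2n}(\mathbb{Z}_p)$, and $H\cong Gl_n(\mathbb{Q}_p(\sqrt a))$ is embedded in $G$ as $\{\left(\begin{smallmatrix} i & j\\ a w_n j w_n & w_n i w_n\end{smallmatrix}\right)\in G: i,j\in Gl_n(\mathbb{Q}_p)\}$, where $w_n$ is the $n\times n$ matrix with ones on the antidiagonal; $K'=K\cap H\cong Gl_n(\mathbb{Z}_p(\sqrt a))$. $\lambda$ is a partition with $l(\lambda)\le 2n$, $\mu$ a partition with $l(\mu)\le n$, $p^\lambda=\mathrm{diag}(p^{\lambda_1},\dots,p^{\lambda_{2n}})$ (similarly $p^\beta$), $g_\mu=\mathrm{diag}(1,\dots,1,p^{-\mu_n},\dots,p^{-\mu_1})$, and $\Lambda_{2n}=\{(\beta_1,\dots,\beta_{2n})\in\mathbb{Z}^{2n}:\beta_1\ge\cdots\ge\beta_{2n}\}$. The measure is the Haar measure on $H$ normalized so $K'$ has measure 1. *)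

theory Defs
  imports "HOL-Analysis.Analysis" "HOL-Number_Theory.Residues"
begin

text \<open>A complete discretely valued field of
characteristic 0 with value group p^Z, av(p) = 1/p and residue field F_p is
(uniquely up to isomorphism) the field of p-adic numbers.\<close>

definition is_Qp :: "nat \<Rightarrow> ('k::field_char_0 \<Rightarrow> real) \<Rightarrow> bool" where
  "is_Qp p av \<longleftrightarrow>
     prime p \<and>
     av 0 = 0 \<and>
     (\<forall>x. x \<noteq> 0 \<longrightarrow> (\<exists>k::int. av x = real p powi k)) \<and>
     (\<forall>x y. av (x * y) = av x * av y) \<and>
     (\<forall>x y. av (x + y) \<le> max (av x) (av y)) \<and>
     av (of_nat p) = 1 / real p \<and>
     (\<forall>x. av x \<le> 1 \<longrightarrow> (\<exists>i<p. av (x - of_nat i) < 1)) \<and>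
     (\<forall>s::nat \<Rightarrow> 'k. (\<forall>e>0. \<exists>N. \<forall>m\<ge>N. \<forall>n\<ge>N. av (s m - s n) < e) \<longrightarrow>
        (\<exists>l. \<forall>e>0. \<exists>N. \<forall>m\<ge>N. av (s m - l) < e))"

section \<open>N x N matrices as functions, zero outside the index range\<close>

type_synonym 'k mat = "nat \<Rightarrow> nat \<Rightarrow> 'k"

definition canon :: "nat \<Rightarrow> 'k::zero mat \<Rightarrow> bool" where
  "canon N A \<longleftrightarrow> (\<forall>i j. (N \<le> i \<or> N \<le> j) \<longrightarrow> A i j = 0)"

definition mmult :: "nat \<Rightarrow> 'k::comm_ring_1 mat \<Rightarrow> 'k mat \<Rightarrow> 'k mat" where
  "mmult N A B = (\<lambda>i j. if i < N \<and> j < N then (\<Sum>k<N. A i k * B k j) else 0)"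

definition mone :: "nat \<Rightarrow> 'k::comm_ring_1 mat" where
  "mone N = (\<lambda>i j. if i < N \<and> j = i then 1 else 0)"

definition diagm :: "nat \<Rightarrow> (nat \<Rightarrow> 'k::comm_ring_1) \<Rightarrow> 'k mat" where
  "diagm N d = (\<lambda>i j. if i < N \<and> j = i then d i else 0)"

definition GL :: "nat \<Rightarrow> 'k::comm_ring_1 mat set" where
  "GL N = {A. canon N A \<and> (\<exists>B. canon N B \<and> mmult N A B = mone N \<and> mmult N B A = mone N)}"

definition intmat :: "('k \<Rightarrow> real) \<Rightarrow> nat \<Rightarrow> 'k mat \<Rightarrow> bool" where
  "intmat av N A \<longleftrightarrow> (\<forall>i<N. \<forall>j<N. av (A i j) \<le> 1)"

definition GLint :: "('k::comm_ring_1 \<Rightarrow> real) \<Rightarrow> nat \<Rightarrow> 'k mat set" where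
  "GLint av N = {A. canon N A \<and> intmat av N A \<and>
      (\<exists>B. canon N B \<and> intmat av N B \<and> mmult N A B = mone N \<and> mmult N B A = mone N)}"

definition ppow :: "nat \<Rightarrow> nat \<Rightarrow> (nat \<Rightarrow> int) \<Rightarrow> 'k::field mat" where
  "ppow N p d = diagm N (\<lambda>i. of_nat p powi d i)"

text \<open>g_mu = diag(1,...,1,p^{-mu_n},...,p^{-mu_1}); mu is 0-indexed (mu 0 = mu_1)\<close>
definition gmu :: "nat \<Rightarrow> nat \<Rightarrow> (nat \<Rightarrow> nat) \<Rightarrow> 'k::field mat" where
  "gmu n p mu = diagm (2*n) (\<lambda>i. if i < n then 1 else of_nat p powi (- int (mu (n - 1 - (i - n)))))"

text \<open>The block matrix ((I, J), (a w J w, w I w)), w the n x n antidiagonal matrix\<close>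
definition blockH :: "nat \<Rightarrow> int \<Rightarrow> 'k::comm_ring_1 mat \<Rightarrow> 'k mat \<Rightarrow> 'k mat" where
  "blockH n a I J = (\<lambda>r c.
     if r < n \<and> c < n then I r c
     else if r < n \<and> c < 2*n then J r (c - n)
     else if r < 2*n \<and> c < n then of_int a * J (n - 1 - (r - n)) (n - 1 - c)
     else if r < 2*n \<and> c < 2*n then I (n - 1 - (r - n)) (n - 1 - (c - n))
     else 0)"

text \<open>H = GL_n(Q_p(sqrt a)) embedded in GL_{2n}(Q_p)\<close>
definition Hgrp :: "nat \<Rightarrow> int \<Rightarrow> 'k::comm_ring_1 mat set" where
  "Hgrp n a = {A \<in> GL (2*n). \<exists>I J. A = blockH n a I J}"

definition dcoset :: "nat \<Rightarrow> 'k::comm_ring_1 mat set \<Rightarrow> 'k mat \<Rightarrow> 'k mat \<Rightarrow> 'k mat set" where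
  "dcoset N K D E = {mmult N (mmult N (mmult N k1 D) k2) E | k1 k2. k1 \<in> K \<and> k2 \<in> K}"

definition mopen :: "('k::ab_group_add \<Rightarrow> real) \<Rightarrow> nat \<Rightarrow> 'k mat set \<Rightarrow> 'k mat set \<Rightarrow> bool" where
  "mopen av N S U \<longleftrightarrow> U \<subseteq> S \<and>
     (\<forall>A\<in>U. \<exists>e>0. \<forall>B\<in>S. (\<forall>i<N. \<forall>j<N. av (B i j - A i j) < e) \<longrightarrow> B \<in> U)"

text \<open>M is a left Haar measure on the Borel sets of S, normalised so Kc has measure 1.
(S is second countable and locally compact, so these conditions determine M.)\<close>
definition is_haar :: "('k::comm_ring_1 \<Rightarrow> real) \<Rightarrow> nat \<Rightarrow> 'k mat set \<Rightarrow> 'k mat set \<Rightarrow> 'k mat measure \<Rightarrow> bool" where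
  "is_haar av N S Kc M \<longleftrightarrow>
     space M = S \<and>
     sets M = sigma_sets S {U. mopen av N S U} \<and>
     (\<forall>g\<in>S. \<forall>X\<in>sets M. emeasure M ((\<lambda>B. mmult N g B) ` X) = emeasure M X) \<and>
     emeasure M Kc = 1"

end

theory Submission
  imports Defs
begin

text \<open>The double coset $K' p^\beta K'$ consists of elements of $H$, whose entries satisfy the
symmetry of the block shape of $H$; since $a$ is a $p$-adic unit, this symmetry relates the
last $n$ columns to the first $n$ ones up to unit factors. Every element of
$K p^\lambda K g_\mu$ has integral first $n$ columns, so an element of the intersection would be
integral, and then so would $p^\beta = h_1^{-1} x h_2^{-1}$ for some $h_1, h_2 \in K'$,
contradicting $\beta_i < 0$. Hence the intersection is empty.\<close>

locale nonarchimedean_abs =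
  fixes av :: "'k::field \<Rightarrow> real"
  assumes av_zero [simp]: "av 0 = 0"
    and av_pos: "x \<noteq> 0 \<Longrightarrow> av x > 0"
    and av_mult: "av (x * y) = av x * av y"
    and av_ultra: "av (x + y) \<le> max (av x) (av y)"
begin

lemma av_nonneg: "av x \<ge> 0"
  using av_pos[of x] by (cases "x = 0") auto

lemma av_one [simp]: "av 1 = 1"
  using av_mult[of 1 1] av_pos[of 1] by simp

lemma av_minus: "av (- x) = av x"
proof -
  have "av (-1) * av (-1) = 1"
    using av_mult[of "-1" "-1"] by simp
  then have "av (-1) = 1 \<or> av (-1) = -1"
    by (simp add: power2_eq_1_iff flip: power2_eq_square)
  then have "av (-1) = 1"
    using av_nonneg[of "-1"] by linarith
  then show ?thesis
    using av_mult[of "-1" x] by simp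
qed

lemma av_mult_le_one: "av x \<le> 1 \<Longrightarrow> av y \<le> 1 \<Longrightarrow> av (x * y) \<le> 1"
  by (simp add: av_mult av_nonneg mult_le_one)

lemma av_sum_le_one: "(\<And>k. k \<in> S \<Longrightarrow> av (f k) \<le> 1) \<Longrightarrow> av (sum f S) \<le> 1"
proof (induction S rule: infinite_finite_induct)
  case (insert x F)
  then have "max (av (f x)) (av (sum f F)) \<le> 1"
    by simp
  then show ?case
    using insert(1,2) av_ultra[of "f x" "sum f F"] by simp linarith
qed simp_all

lemma av_of_nat_le_one: "av (of_nat m) \<le> 1"
proof -
  have "av (\<Sum>k<m. 1) \<le> 1"
    by (rule av_sum_le_one) simp
  then show ?thesis
    by simp
qed

lemma av_of_int_le_one: "av (of_int m) \<le> 1"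
proof (cases "m \<ge> 0")
  case True
  then show ?thesis
    using av_of_nat_le_one[of "nat m"] by simp
next
  case False
  then have "of_int m = - (of_nat (nat (- m)) :: 'k)"
    by simp
  then show ?thesis
    using av_of_nat_le_one[of "nat (- m)"] av_minus by simp
qed

lemma av_power: "av (x ^ m) = av x ^ m"
  by (induction m) (simp_all add: av_mult)

lemma av_inverse: "av (inverse x) = inverse (av x)"
proof (cases "x = 0")
  case False
  then have "av x * av (inverse x) = 1"
    by (simp flip: av_mult)
  then show ?thesis
    by (simp add: inverse_unique)
qed simp

lemma av_powi: "av (x powi k) = av x powi k"
proof (cases "k \<ge> 0")
  case True
  then show ?thesis
    by (simp add: power_int_def av_power)
next
  case False
  then show ?thesis
    by (simp add: power_int_def av_power av_inverse)
qed

text \<open>From a Bezout relation $u a + v q = 1$: the second summand is small, so the first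
cannot be.\<close>
lemma av_of_int_coprime:
  assumes "coprime a q" and small: "av (of_int q) < 1"
  shows "av (of_int a) = 1"
proof -
  obtain u v where uv: "u * a + v * q = 1"
    using bezout_int[of a q] assms(1) by auto
  have "1 = av (of_int u * of_int a + of_int v * of_int q)"
    using arg_cong[OF uv, of "\<lambda>t. av (of_int t)"] by simp
  also have "\<dots> \<le> max (av (of_int u * of_int a)) (av (of_int v * of_int q))"
    by (rule av_ultra)
  also have "\<dots> = max (av (of_int u) * av (of_int a)) (av (of_int v) * av (of_int q))"
    by (simp add: av_mult)
  finally have "1 \<le> max (av (of_int u) * av (of_int a)) (av (of_int v) * av (of_int q))" .
  moreover have "av (of_int v) * av (of_int q) < 1"
    using av_of_int_le_one[of v] small av_nonneg by (meson le_less_trans mult_left_le_one_le)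
  ultimately have "1 \<le> av (of_int u) * av (of_int a)"
    by linarith
  also have "\<dots> \<le> av (of_int a)"
    using av_of_int_le_one[of u] av_nonneg by (simp add: mult_left_le_one_le)
  finally show ?thesis
    using av_of_int_le_one[of a] by linarith
qed

end

lemma is_Qp_nonarchimedean_abs:
  assumes "is_Qp p av"
  shows "nonarchimedean_abs av"
proof
  have p: "p \<ge> 2"
    using assms prime_ge_2_nat by (simp add: is_Qp_def)
  show "av x > 0" if x: "x \<noteq> 0" for x
  proof -
    obtain k :: int where "av x = real p powi k"
      using assms x unfolding is_Qp_def by blast
    with p show ?thesis by simp
  qed
qed (use assms in \<open>simp_all add: is_Qp_def\<close>)

lemma canon_mmult: "canon N (mmult N A B)"
  by (simp add: canon_def mmult_def)

lemma mmult_assoc: "mmult N (mmult N A B) C = mmult N A (mmult N B C)"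
proof (intro ext)
  fix i j
  show "mmult N (mmult N A B) C i j = mmult N A (mmult N B C) i j"
  proof (cases "i < N \<and> j < N")
    case True
    have "mmult N (mmult N A B) C i j = (\<Sum>k<N. \<Sum>l<N. A i l * B l k * C k j)"
      using True by (simp add: mmult_def sum_distrib_right)
    also have "\<dots> = (\<Sum>l<N. \<Sum>k<N. A i l * B l k * C k j)"
      by (rule sum.swap)
    also have "\<dots> = mmult N A (mmult N B C) i j"
      using True by (simp add: mmult_def sum_distrib_left mult.assoc)
    finally show ?thesis .
  qed (auto simp: mmult_def)
qed

lemma mmult_mone: "canon N A \<Longrightarrow> mmult N A (mone N) = A"
  by (auto simp: fun_eq_iff mmult_def mone_def canon_def if_distrib[of "(*) _"] sum.delta
      cong: if_cong)

lemma mone_mmult: "canon N A \<Longrightarrow> mmult N (mone N) A = A"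
  by (auto simp: fun_eq_iff mmult_def mone_def canon_def if_distrib[of "(*)"] if_distribR sum.delta
      cong: if_cong)

lemma mmult_diagm: "i < N \<Longrightarrow> j < N \<Longrightarrow> mmult N A (diagm N d) i j = A i j * d j"
  by (simp add: mmult_def diagm_def if_distrib[of "(*) _"] sum.delta cong: if_cong)

lemma canon_ppow: "canon N (ppow N p d)"
  by (simp add: canon_def ppow_def diagm_def)

context nonarchimedean_abs
begin

lemma intmat_mmult: "intmat av N A \<Longrightarrow> intmat av N B \<Longrightarrow> intmat av N (mmult N A B)"
  unfolding intmat_def mmult_def by (auto intro!: av_sum_le_one av_mult_le_one)

lemma intmat_ppow:
  assumes "av (of_nat p) \<le> 1" and "\<forall>i<N. d i \<ge> 0"
  shows "intmat av N (ppow N p d)"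
proof -
  have "av (of_nat p powi d i) \<le> 1" if "i < N" for i
  proof -
    have "av (of_nat p powi d i) = av (of_nat p) ^ nat (d i)"
      using assms(2) that av_powi[of "of_nat p" "d i"] by (simp add: power_int_def)
    then show ?thesis
      using assms(1) av_nonneg by (simp add: power_le_one)
  qed
  then show ?thesis
    by (simp add: intmat_def ppow_def diagm_def)
qed

lemma not_intmat_ppow:
  assumes "0 < av (of_nat p)" "av (of_nat p) < 1" and "i < N" and "d i < 0"
  shows "\<not> intmat av N (ppow N p d)"
proof -
  have "av (of_nat p powi d i) = inverse (av (of_nat p)) ^ nat (- d i)"
    using assms(4) av_powi[of "of_nat p" "d i"] by (simp add: power_int_def)
  also have "\<dots> > 1"
    using assms by (intro one_less_power) (auto simp: one_less_inverse)
  finally show ?thesis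
    using assms(3) by (auto simp: intmat_def ppow_def diagm_def)
qed

end

text \<open>Reflecting both indices of a block matrix in $H$ through $i \mapsto 2n-1-i$ swaps the
blocks $I$ and $w I w$, and $J$ and $a\,w J w$; the weights absorb the factor $a$.\<close>

definition H_weight :: "nat \<Rightarrow> int \<Rightarrow> nat \<Rightarrow> 'k::comm_ring_1" where
  "H_weight n a r = (if r < n then 1 else of_int a)"

definition H_sym :: "nat \<Rightarrow> int \<Rightarrow> 'k::comm_ring_1 mat \<Rightarrow> bool" where
  "H_sym n a X \<longleftrightarrow>
     (\<forall>r<2*n. \<forall>c<2*n. H_weight n a r * X (2*n-1-r) (2*n-1-c) = H_weight n a c * X r c)"

lemma H_sym_blockH: "H_sym n a (blockH n a I J)"
  unfolding H_sym_def
proof (intro allI impI)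
  fix r c assume rc: "r < 2*n" "c < 2*n"
  consider "r < n" "c < n" | "r < n" "\<not> c < n" | "\<not> r < n" "c < n" | "\<not> r < n" "\<not> c < n"
    by blast
  then show "H_weight n a r * blockH n a I J (2*n-1-r) (2*n-1-c) = H_weight n a c * blockH n a I J r c"
  proof cases
    case 1
    then have "n - 1 - (2*n - 1 - r - n) = r" "n - 1 - (2*n - 1 - c - n) = c"
      by auto
    with 1 rc show ?thesis
      by (auto simp: H_weight_def blockH_def)
  next
    case 2
    then have "n - 1 - (2*n - 1 - r - n) = r" "n - 1 - (2*n - 1 - c) = c - n"
      using rc by auto
    with 2 rc show ?thesis
      by (auto simp: H_weight_def blockH_def)
  next
    case 3
    then have "n - 1 - (r - n) = 2*n - 1 - r" "2*n - 1 - c - n = n - 1 - c"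
      by auto
    with 3 rc show ?thesis
      by (auto simp: H_weight_def blockH_def)
  next
    case 4
    then have "n - 1 - (r - n) = 2*n - 1 - r" "n - 1 - (c - n) = 2*n - 1 - c"
      by auto
    with 4 rc show ?thesis
      by (auto simp: H_weight_def blockH_def)
  qed
qed

lemma H_sym_mmult:
  assumes X: "H_sym n a X" and Y: "H_sym n a Y"
  shows "H_sym n a (mmult (2*n) X Y)"
  unfolding H_sym_def
proof (intro allI impI)
  fix r c assume rc: "r < 2*n" "c < 2*n"
  let ?s = "\<lambda>k. 2*n - 1 - k" and ?w = "H_weight n a"
  have "?w r * mmult (2*n) X Y (?s r) (?s c) = (\<Sum>k<2*n. ?w r * X (?s r) k * Y k (?s c))"
    using rc by (simp add: mmult_def sum_distrib_left mult.assoc)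
  also have "\<dots> = (\<Sum>k<2*n. ?w r * X (?s r) (?s k) * Y (?s k) (?s c))"
    using sum.nat_diff_reindex[where g = "\<lambda>k. ?w r * X (?s r) k * Y k (?s c)"] by simp
  also have "\<dots> = (\<Sum>k<2*n. X r k * (?w k * Y (?s k) (?s c)))"
    using X rc by (intro sum.cong) (auto simp: H_sym_def algebra_simps)
  also have "\<dots> = (\<Sum>k<2*n. X r k * (?w c * Y k c))"
    using Y rc by (intro sum.cong) (auto simp: H_sym_def)
  also have "\<dots> = ?w c * mmult (2*n) X Y r c"
    using rc by (simp add: mmult_def sum_distrib_left algebra_simps)
  finally show "?w r * mmult (2*n) X Y (?s r) (?s c) = ?w c * mmult (2*n) X Y r c" .
qed

lemma H_sym_diagm:
  assumes d: "\<forall>i<n. d (2*n - 1 - i) = d i"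
  shows "H_sym n a (diagm (2*n) d)"
  unfolding H_sym_def
proof (intro allI impI)
  fix r c assume rc: "r < 2*n" "c < 2*n"
  have "d (2*n - 1 - r) = d r"
    using d[rule_format, of "2*n - 1 - r"] d[rule_format, of r] rc
    by (cases "r < n") (simp_all add: Suc_diff_Suc)
  moreover have "2*n - 1 - c = 2*n - 1 - r \<longleftrightarrow> c = r"
    using rc by auto
  ultimately show "H_weight n a r * diagm (2*n) d (2*n-1-r) (2*n-1-c) = H_weight n a c * diagm (2*n) d r c"
    using rc by (auto simp: diagm_def)
qed

lemma H_sym_dcoset:
  assumes "K \<subseteq> Hgrp n a" and "H_sym n a D" and "x \<in> dcoset (2*n) K D (mone (2*n))"
  shows "H_sym n a x"
proof -
  have sym_K: "H_sym n a h" if "h \<in> K" for h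
    using subsetD[OF assms(1) that] by (auto simp: Hgrp_def H_sym_blockH)
  obtain h1 h2 where "h1 \<in> K" "h2 \<in> K" and x: "x = mmult (2*n) (mmult (2*n) h1 D) h2"
    using assms(3) by (auto simp: dcoset_def mmult_mone canon_mmult)
  then have "H_sym n a h1" "H_sym n a h2"
    by (simp_all add: sym_K)
  then show ?thesis
    unfolding x using assms(2) by (intro H_sym_mmult)
qed

context nonarchimedean_abs
begin

lemma dcoset_gmu_first_columns_integral:
  assumes P: "intmat av (2*n) P" and x: "x \<in> dcoset (2*n) (GLint av (2*n)) P (gmu n p mu)"
    and "i < 2*n" "j < n"
  shows "av (x i j) \<le> 1"
proof -
  obtain k1 k2 where k: "k1 \<in> GLint av (2*n)" "k2 \<in> GLint av (2*n)"
    and "x = mmult (2*n) (mmult (2*n) (mmult (2*n) k1 P) k2) (gmu n p mu)"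
    using x by (auto simp: dcoset_def)
  moreover have "intmat av (2*n) (mmult (2*n) (mmult (2*n) k1 P) k2)"
    using k P by (intro intmat_mmult) (auto simp: GLint_def)
  ultimately show ?thesis
    using assms(3,4) by (simp add: gmu_def mmult_diagm intmat_def)
qed

lemma intmat_if_H_sym:
  assumes sym: "H_sym n a x" and a: "av (of_int a) = 1"
    and left: "\<forall>i<2*n. \<forall>j<n. av (x i j) \<le> 1"
  shows "intmat av (2*n) x"
  unfolding intmat_def
proof (intro allI impI)
  fix r c assume rc: "r < 2*n" "c < 2*n"
  show "av (x r c) \<le> 1"
  proof (cases "c < n")
    case False
    have "av (x r c) = av (H_weight n a r * x (2*n-1-r) (2*n-1-c))"
      using sym rc False a by (simp add: H_sym_def H_weight_def av_mult)
    also have "\<dots> \<le> 1"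
      using left rc False a by (intro av_mult_le_one) (auto simp: H_weight_def)
    finally show ?thesis .
  qed (use left rc in simp)
qed

lemma intmat_dcoset_middle:
  assumes "K \<subseteq> GLint av N" "canon N D" "x \<in> dcoset N K D (mone N)" "intmat av N x"
  shows "intmat av N D"
proof -
  obtain h1 h2 where "h1 \<in> GLint av N" "h2 \<in> GLint av N"
    and x: "x = mmult N (mmult N h1 D) h2"
    using assms(1,3) by (auto simp: dcoset_def mmult_mone canon_mmult)
  then obtain g1 g2 where g: "canon N g1" "intmat av N g1" "mmult N g1 h1 = mone N"
    "canon N g2" "intmat av N g2" "mmult N h2 g2 = mone N"
    unfolding GLint_def by blast
  have "D = mmult N (mmult N g1 x) g2"
    using g assms(2) by (simp add: x mmult_assoc mone_mmult mmult_mone flip: mmult_assoc[of N g1 h1])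
  then show ?thesis
    using g assms(4) by (simp add: intmat_mmult)
qed


lemma dcoset_gmu_disjoint_dcoset_H:
  assumes av_p: "0 < av (of_nat p)" "av (of_nat p) < 1" and a_unit: "av (of_int a) = 1"
    and beta_sym: "\<forall>i<n. beta (2*n - 1 - i) = beta i" and beta_neg: "\<exists>i<2*n. beta i < 0"
  shows "dcoset (2*n) (GLint av (2*n)) (ppow (2*n) p (\<lambda>i. int (lam i))) (gmu n p mu)
          \<inter> dcoset (2*n) (GLint av (2*n) \<inter> Hgrp n a) (ppow (2*n) p beta) (mone (2*n)) = {}"
proof (intro equals0I, elim IntE)
  fix x
  assume x: "x \<in> dcoset (2*n) (GLint av (2*n)) (ppow (2*n) p (\<lambda>i. int (lam i))) (gmu n p mu)"
    and x': "x \<in> dcoset (2*n) (GLint av (2*n) \<inter> Hgrp n a) (ppow (2*n) p beta) (mone (2*n))"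
  have "H_sym n a (ppow (2*n) p beta)"
    unfolding ppow_def using beta_sym by (intro H_sym_diagm) simp
  then have "H_sym n a x"
    using x' by (rule H_sym_dcoset[rotated]) simp
  moreover have "\<forall>i<2*n. \<forall>j<n. av (x i j) \<le> 1"
    using dcoset_gmu_first_columns_integral[OF intmat_ppow x] av_p by simp
  ultimately have "intmat av (2*n) x"
    using a_unit by (intro intmat_if_H_sym)
  then have "intmat av (2*n) (ppow (2*n) p beta)"
    by (rule intmat_dcoset_middle[OF Int_lower1 canon_ppow x'])
  then show False
    using beta_neg av_p not_intmat_ppow by blast
qed

end

text \<open>The intersection is empty.\<close>

theorem lemma4p1:
  fixes p :: nat and av :: "'k::field_char_0 \<Rightarrow> real" and a :: int and n :: nat
    and lam :: "nat \<Rightarrow> nat" and mu :: "nat \<Rightarrow> nat" and beta :: "nat \<Rightarrow> int"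
    and M :: "'k mat measure"
  assumes Qp: "is_Qp p av"
    and odd: "odd p"
    and a_coprime: "coprime a (int p)"
    and a_nonsq: "\<not> QuadRes (int p) a"
    and lam_part: "\<forall>i j. i \<le> j \<longrightarrow> j < 2*n \<longrightarrow> lam j \<le> lam i"
    and mu_part: "\<forall>i j. i \<le> j \<longrightarrow> j < n \<longrightarrow> mu j \<le> mu i"
    and beta_dom: "\<forall>i j. i \<le> j \<longrightarrow> j < 2*n \<longrightarrow> beta j \<le> beta i"
    and beta_sym: "\<forall>i<n. beta (2*n - 1 - i) = beta i"
    and beta_neg: "\<exists>i<2*n. beta i < 0"
    and haar: "is_haar av (2*n) (Hgrp n a) (GLint av (2*n) \<inter> Hgrp n a) M"
  shows "dcoset (2*n) (GLint av (2*n)) (ppow (2*n) p (\<lambda>i. int (lam i))) (gmu n p mu)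
           \<inter> dcoset (2*n) (GLint av (2*n) \<inter> Hgrp n a) (ppow (2*n) p beta) (mone (2*n)) \<in> sets M
       \<and> emeasure M (dcoset (2*n) (GLint av (2*n)) (ppow (2*n) p (\<lambda>i. int (lam i))) (gmu n p mu)
           \<inter> dcoset (2*n) (GLint av (2*n) \<inter> Hgrp n a) (ppow (2*n) p beta) (mone (2*n))) = 0"
proof -
  interpret nonarchimedean_abs av
    using Qp by (rule is_Qp_nonarchimedean_abs)
  have av_p: "0 < av (of_nat p :: 'k)" "av (of_nat p :: 'k) < 1"
    using Qp prime_ge_2_nat[of p] by (auto simp: is_Qp_def)
  have "av (of_int a :: 'k) = 1"
    using av_of_int_coprime[OF a_coprime] av_p by simp
  then show ?thesis
    using dcoset_gmu_disjoint_dcoset_H[OF av_p _ beta_sym beta_neg] by simp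
qed

end
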